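(* Consider the four-stage implicit Runge–Kutta method with Butcher tableau $(\mathbf c,\mathbf A,\mathbf b)$ given by \[ \begin{array}{c|cccc} 0 & 0 & 0 & 0 & 0 \\ \frac 1 3 & \frac{47}{360} & \frac{89}{360} & -\frac{19}{360} & \frac{3}{360} \\ \frac 2 3 & \frac{21}{180} & \frac{77}{180} & \frac{23}{180} & -\frac{1}{180} \\ 1 & \frac 1 8 & \frac 3 8 & \frac 3 8 & \frac 1 8 \\ \hline & \frac 1 8 & \frac 3 8 & \frac 3 8 & \frac 1 8 \end{array} \] This method is stiffly accurate and has explicit first line; it is A-stable; its order of convergence is $p=4$; and its stage order is $\tilde q=3$.
   Context: An $s$-stage Runge–Kutta method with Butcher tableau $\mathbf c=(c_i)$, $\mathbf A=(a_{i,j})$, $\mathbf b=(b_i)$ applied to the initial value problem $y'(x)=f(x,y(x))$, $y(a)=y_a$, with step size $h$ and grid $x_n=a+nh$, computes $y_{n+1}=y_n+h\sum_{i=1}^s b_iK_i$, where $K_i=f\big(x_n+hc_i,\ y_n+h\sum_{j=1}^s a_{i,j}K_j\big)$, $i=1,\dots,s$. The method has order $p$ if its local truncation error is $\mathcal O(h^{p+1})$ (equivalently, all Butcher order conditions up to order $p$ hold). The method has explicit first line if $a_{1,1}=\dots=a_{1,s}=0$, and is stiffly accurate if $a_{s,i}=b_i$ for all $i=1,\dots,s$. Its stability function is $R(z)=\det(\mathbf I-z\mathbf A+z\mathbf e\mathbf b^T)/\det(\mathbf I-z\mathbf A)$ (with $\mathbf I$ the identity matrix and $\mathbf e$ the vector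 of ones), i.e. applying the method to $y'=\lambda y$ gives $y_{n+1}=R(h\lambda)y_n$; the method is A-stable if its stability domain $\{z\in\mathbb C:|R(z)|\le 1\}$ contains the left half-plane $\{z:\mathrm{Re}(z)\le 0\}$. Simplifying conditions: $B(p)$: $\sum_{i=1}^s b_ic_i^{k-1}=1/k$ for $k=1,\dots,p$; $C(q)$: $\sum_{j=1}^s a_{i,j}c_j^{k-1}=c_i^k/k$ for $k=1,\dots,q$, $i=1,\dots,s$. The stage order is the maximal integer $\tilde q$ such that $B(p)$ and $C(q)$ hold for $p=1,\dots,\tilde q$ and $q=1,\dots,\tilde q$. *)

theory Defs
  imports "HOL-Analysis.Analysis" "Jordan_Normal_Form.Determinant"
begin

text \<open>An s-stage Runge-Kutta method is given by a Butcher tableau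
  A :: nat => nat => real, b :: nat => real, c :: nat => real, where the
  stages are indexed by 0, ..., s-1 (stage i+1 of the paper is index i).\<close>

definition explicit_first_line :: "nat \<Rightarrow> (nat \<Rightarrow> nat \<Rightarrow> real) \<Rightarrow> bool" where
  "explicit_first_line s A \<longleftrightarrow> (\<forall>j<s. A 0 j = 0)"

definition stiffly_accurate :: "nat \<Rightarrow> (nat \<Rightarrow> nat \<Rightarrow> real) \<Rightarrow> (nat \<Rightarrow> real) \<Rightarrow> bool" where
  "stiffly_accurate s A b \<longleftrightarrow> (\<forall>i<s. A (s - 1) i = b i)"

definition stab_num :: "nat \<Rightarrow> (nat \<Rightarrow> nat \<Rightarrow> real) \<Rightarrow> (nat \<Rightarrow> real) \<Rightarrow> complex \<Rightarrow> complex" where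
  "stab_num s A b z = det (mat s s (\<lambda>(i, j). (if i = j then 1 else 0)
        - z * complex_of_real (A i j) + z * complex_of_real (b j)))"

definition stab_den :: "nat \<Rightarrow> (nat \<Rightarrow> nat \<Rightarrow> real) \<Rightarrow> complex \<Rightarrow> complex" where
  "stab_den s A z = det (mat s s (\<lambda>(i, j). (if i = j then 1 else 0)
        - z * complex_of_real (A i j)))"

definition stab_fun :: "nat \<Rightarrow> (nat \<Rightarrow> nat \<Rightarrow> real) \<Rightarrow> (nat \<Rightarrow> real) \<Rightarrow> complex \<Rightarrow> complex" where
  "stab_fun s A b z = stab_num s A b z / stab_den s A z"

definition stab_domain :: "nat \<Rightarrow> (nat \<Rightarrow> nat \<Rightarrow> real) \<Rightarrow> (nat \<Rightarrow> real) \<Rightarrow> complex set" where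
  "stab_domain s A b = {z. stab_den s A z \<noteq> 0 \<and> cmod (stab_fun s A b z) \<le> 1}"

definition A_stable :: "nat \<Rightarrow> (nat \<Rightarrow> nat \<Rightarrow> real) \<Rightarrow> (nat \<Rightarrow> real) \<Rightarrow> bool" where
  "A_stable s A b \<longleftrightarrow> {z. Re z \<le> 0} \<subseteq> stab_domain s A b"

datatype rtree = RNode "rtree list"

fun rt_order :: "rtree \<Rightarrow> nat" where
  "rt_order (RNode ts) = 1 + sum_list (map rt_order ts)"

fun rt_gamma :: "rtree \<Rightarrow> nat" where
  "rt_gamma (RNode ts) = rt_order (RNode ts) * prod_list (map rt_gamma ts)"

fun rt_stage_weight :: "nat \<Rightarrow> (nat \<Rightarrow> nat \<Rightarrow> real) \<Rightarrow> rtree \<Rightarrow> nat \<Rightarrow> real" where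
  "rt_stage_weight s A (RNode ts) i =
     prod_list (map (\<lambda>u. \<Sum>j<s. A i j * rt_stage_weight s A u j) ts)"

definition elem_weight :: "nat \<Rightarrow> (nat \<Rightarrow> nat \<Rightarrow> real) \<Rightarrow> (nat \<Rightarrow> real) \<Rightarrow> rtree \<Rightarrow> real" where
  "elem_weight s A b t = (\<Sum>i<s. b i * rt_stage_weight s A t i)"

text \<open>All Butcher order conditions up to order p hold (together with the
  row-sum condition c_i = sum_j a_ij, under which the tree conditions are the
  order conditions for the non-autonomous problem y' = f(x, y)).\<close>

definition rk_order_conditions ::
  "nat \<Rightarrow> (nat \<Rightarrow> real) \<Rightarrow> (nat \<Rightarrow> nat \<Rightarrow> real) \<Rightarrow> (nat \<Rightarrow> real) \<Rightarrow> nat \<Rightarrow> bool" where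
  "rk_order_conditions s c A b p \<longleftrightarrow>
     (\<forall>i<s. c i = (\<Sum>j<s. A i j)) \<and>
     (\<forall>t. rt_order t \<le> p \<longrightarrow> elem_weight s A b t = 1 / real (rt_gamma t))"

definition rk_order :: "nat \<Rightarrow> (nat \<Rightarrow> real) \<Rightarrow> (nat \<Rightarrow> nat \<Rightarrow> real) \<Rightarrow> (nat \<Rightarrow> real) \<Rightarrow> nat \<Rightarrow> bool" where
  "rk_order s c A b p \<longleftrightarrow>
     rk_order_conditions s c A b p \<and> \<not> rk_order_conditions s c A b (Suc p)"

definition cond_B :: "nat \<Rightarrow> (nat \<Rightarrow> real) \<Rightarrow> (nat \<Rightarrow> real) \<Rightarrow> nat \<Rightarrow> bool" where
  "cond_B s c b p \<longleftrightarrow> (\<forall>k\<in>{1..p}. (\<Sum>i<s. b i * c i ^ (k - 1)) = 1 / real k)"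

definition cond_C :: "nat \<Rightarrow> (nat \<Rightarrow> real) \<Rightarrow> (nat \<Rightarrow> nat \<Rightarrow> real) \<Rightarrow> nat \<Rightarrow> bool" where
  "cond_C s c A q \<longleftrightarrow>
     (\<forall>k\<in>{1..q}. \<forall>i<s. (\<Sum>j<s. A i j * c j ^ (k - 1)) = c i ^ k / real k)"

definition stage_order :: "nat \<Rightarrow> (nat \<Rightarrow> real) \<Rightarrow> (nat \<Rightarrow> nat \<Rightarrow> real) \<Rightarrow> (nat \<Rightarrow> real) \<Rightarrow> nat \<Rightarrow> bool" where
  "stage_order s c A b q \<longleftrightarrow>
     (\<forall>p\<in>{1..q}. cond_B s c b p \<and> cond_C s c A p) \<and>
     \<not> (cond_B s c b (Suc q) \<and> cond_C s c A (Suc q))"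

definition tab_c :: "nat \<Rightarrow> real" where
  "tab_c i = (if i < 4 then [0, 1/3, 2/3, 1] ! i else 0)"

definition tab_A :: "nat \<Rightarrow> nat \<Rightarrow> real" where
  "tab_A i j = (if i < 4 \<and> j < 4 then
     [[0, 0, 0, 0],
      [47/360, 89/360, -19/360, 3/360],
      [21/180, 77/180, 23/180, -1/180],
      [1/8, 3/8, 3/8, 1/8]] ! i ! j else 0)"

definition tab_b :: "nat \<Rightarrow> real" where
  "tab_b j = (if j < 4 then [1/8, 3/8, 3/8, 1/8] ! j else 0)"

end

(* The tableau satisfies the simplifying assumptions B(4) and C(3), but not C(4). Under C(q)
   the stage weight at stage i of a rooted tree t of order at most q + 1 is
   c_i^(rho(t) - 1) rho(t) / gamma(t), just as for the bushy tree of the same order, so B(p)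
   turns every order condition of order at most min p (q + 1) into an identity: the order is
   at least 4. Conversely the order conditions of the bushy trees are exactly B(p), and B(5)
   fails because sum_i b_i c_i^4 = 11/54; so the order is exactly 4.

   Expanding the determinants shows that the stability function is the (3,3) Pade approximant
   P(z)/P(-z) of exp, with P(z) = 1 + z/2 + z^2/10 + z^3/120. With u = -Re z and y = Im z,
   both 14400 |P(-z)|^2 and 14400 (|P(-z)|^2 - |P(z)|^2) are polynomials in u and y with
   nonnegative coefficients, the latter divisible by u. Hence |P(-z)| >= 1 and |P(z)| <= |P(-z)|
   on the left half-plane, which is A-stability. *)

theory Submission
  imports Defs
begin

lemma det_mat_Suc:
  fixes f :: "nat \<times> nat \<Rightarrow> 'a::comm_ring_1"
  shows "det (mat (Suc n) (Suc n) f) = (\<Sum>j<Suc n. (-1)^j * f (0, j) *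
     det (mat n n (\<lambda>(i, k). f (Suc i, if k < j then k else Suc k))))"
proof -
  have "det (mat (Suc n) (Suc n) f) =
      (\<Sum>j<Suc n. mat (Suc n) (Suc n) f $$ (0, j) * cofactor (mat (Suc n) (Suc n) f) 0 j)"
    by (rule laplace_expansion_row) auto
  also have "\<dots> = (\<Sum>j<Suc n. (-1)^j * f (0, j) *
     det (mat n n (\<lambda>(i, k). f (Suc i, if k < j then k else Suc k))))"
  proof (rule sum.cong[OF refl])
    fix j assume "j \<in> {..<Suc n}"
    moreover have "mat_delete (mat (Suc n) (Suc n) f) 0 j =
        mat n n (\<lambda>(i, k). f (Suc i, if k < j then k else Suc k))"
      by (rule eq_matI) (auto simp: mat_delete_def)
    ultimately show "mat (Suc n) (Suc n) f $$ (0, j) * cofactor (mat (Suc n) (Suc n) f) 0 j =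
        (-1)^j * f (0, j) * det (mat n n (\<lambda>(i, k). f (Suc i, if k < j then k else Suc k)))"
      by (simp add: cofactor_def)
  qed
  finally show ?thesis .
qed

lemma det_mat_2:
  "det (mat 2 2 f) = (f (0,0) * f (1,1) - f (0,1) * f (1,0) :: 'a::comm_ring_1)"
  by (simp add: det_mat_Suc numeral_2_eq_2)

lemma det_mat_3:
  "det (mat 3 3 f) =
     (f (0,0) * (f (1,1) * f (2,2) - f (1,2) * f (2,1))
    - f (0,1) * (f (1,0) * f (2,2) - f (1,2) * f (2,0))
    + f (0,2) * (f (1,0) * f (2,1) - f (1,1) * f (2,0)) :: 'a::comm_ring_1)"
  unfolding numeral_3_eq_3 by (simp add: det_mat_Suc det_mat_2 eval_nat_numeral algebra_simps)

lemma det_mat_4: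
  fixes f :: "nat \<times> nat \<Rightarrow> 'a::comm_ring_1"
  shows "det (mat 4 4 f) =
     f(0,0)*(f(1,1)*(f(2,2)*f(3,3)-f(2,3)*f(3,2)) - f(1,2)*(f(2,1)*f(3,3)-f(2,3)*f(3,1)) + f(1,3)*(f(2,1)*f(3,2)-f(2,2)*f(3,1)))
   - f(0,1)*(f(1,0)*(f(2,2)*f(3,3)-f(2,3)*f(3,2)) - f(1,2)*(f(2,0)*f(3,3)-f(2,3)*f(3,0)) + f(1,3)*(f(2,0)*f(3,2)-f(2,2)*f(3,0)))
   + f(0,2)*(f(1,0)*(f(2,1)*f(3,3)-f(2,3)*f(3,1)) - f(1,1)*(f(2,0)*f(3,3)-f(2,3)*f(3,0)) + f(1,3)*(f(2,0)*f(3,1)-f(2,1)*f(3,0)))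
   - f(0,3)*(f(1,0)*(f(2,1)*f(3,2)-f(2,2)*f(3,1)) - f(1,1)*(f(2,0)*f(3,2)-f(2,2)*f(3,0)) + f(1,2)*(f(2,0)*f(3,1)-f(2,1)*f(3,0)))"
proof -
  have "(4::nat) = Suc 3" by simp
  then show ?thesis by (simp only:) (simp add: det_mat_Suc det_mat_3 eval_nat_numeral algebra_simps)
qed

lemma A_stableI:
  assumes "\<And>z. Re z \<le> 0 \<Longrightarrow> stab_den s A z \<noteq> 0"
    and "\<And>z. Re z \<le> 0 \<Longrightarrow> cmod (stab_num s A b z) \<le> cmod (stab_den s A z)"
  shows "A_stable s A b"
  using assms
  by (auto simp: A_stable_def stab_domain_def stab_fun_def norm_divide divide_le_eq_1)

lemma rt_order_ge_1: "1 \<le> rt_order t"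
  by (cases t) simp

lemma prod_list_power_divide:
  "prod_list (map (\<lambda>u. (x::real) ^ f u / real (g u)) us) =
   x ^ sum_list (map f us) / real (prod_list (map g us))"
  by (induction us) (auto simp: power_add)

lemma rt_stage_weight_cond_C:
  assumes C: "cond_C s c A q" and "rt_order t \<le> Suc q" and "i < s"
  shows "rt_stage_weight s A t i = c i ^ (rt_order t - 1) * rt_order t / rt_gamma t"
  using assms(2,3)
proof (induction t arbitrary: i)
  case (RNode ts)
  have subtree: "(\<Sum>j<s. A i j * rt_stage_weight s A u j) = c i ^ rt_order u / rt_gamma u"
    if u: "u \<in> set ts" for u
  proof -
    have "rt_order u \<le> q"
      using RNode.prems(1) u member_le_sum_list[of "rt_order u" "map rt_order ts"] by auto
    then have "(\<Sum>j<s. A i j * rt_stage_weight s A u j)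
        = (\<Sum>j<s. A i j * c j ^ (rt_order u - 1)) * (rt_order u / rt_gamma u)"
      unfolding sum_distrib_right using RNode.IH[OF u] by (intro sum.cong) auto
    also have "(\<Sum>j<s. A i j * c j ^ (rt_order u - 1)) = c i ^ rt_order u / rt_order u"
      using C \<open>rt_order u \<le> q\<close> rt_order_ge_1[of u] RNode.prems(2) unfolding cond_C_def by auto
    finally show ?thesis
      using rt_order_ge_1[of u] by simp
  qed
  have "rt_stage_weight s A (RNode ts) i = prod_list (map (\<lambda>u. c i ^ rt_order u / rt_gamma u) ts)"
    by (simp cong: map_cong add: subtree)
  also have "\<dots> = c i ^ sum_list (map rt_order ts) / prod_list (map rt_gamma ts)"
    by (rule prod_list_power_divide)
  also have "\<dots> = c i ^ (rt_order (RNode ts) - 1) * rt_order (RNode ts) / rt_gamma (RNode ts)"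
  proof -
    define \<rho> where "\<rho> = rt_order (RNode ts)"
    have "\<rho> - 1 = sum_list (map rt_order ts)" and "1 \<le> \<rho>"
      and "rt_gamma (RNode ts) = \<rho> * prod_list (map rt_gamma ts)"
      by (simp_all add: \<rho>_def)
    then show ?thesis
      unfolding \<rho>_def[symmetric] by simp
  qed
  finally show ?case .
qed

lemma elem_weight_cond_B_cond_C:
  assumes "cond_B s c b p" and "cond_C s c A q"
    and "rt_order t \<le> p" and "rt_order t \<le> Suc q"
  shows "elem_weight s A b t = 1 / rt_gamma t"
proof -
  have "elem_weight s A b t = (\<Sum>i<s. b i * c i ^ (rt_order t - 1)) * (rt_order t / rt_gamma t)"
    unfolding elem_weight_def sum_distrib_right
    using rt_stage_weight_cond_C[OF assms(2,4)] by (intro sum.cong) auto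
  also have "(\<Sum>i<s. b i * c i ^ (rt_order t - 1)) = 1 / rt_order t"
    using assms(1,3) rt_order_ge_1[of t] unfolding cond_B_def by auto
  finally show ?thesis
    using rt_order_ge_1[of t] by simp
qed

lemma row_sum_cond_C:
  assumes "cond_C s c A q" and "1 \<le> q" and "i < s"
  shows "c i = (\<Sum>j<s. A i j)"
  using assms unfolding cond_C_def by (auto dest!: bspec[of _ _ 1])

lemma rk_order_conditions_cond_B_cond_C:
  assumes B: "cond_B s c b p" and C: "cond_C s c A q" and "1 \<le> q" and "p \<le> Suc q"
  shows "rk_order_conditions s c A b p"
  unfolding rk_order_conditions_def
proof (intro conjI allI impI)
  fix i assume "i < s"
  then show "c i = (\<Sum>j<s. A i j)"
    by (rule row_sum_cond_C[OF C \<open>1 \<le> q\<close>])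
next
  fix t assume "rt_order t \<le> p"
  with \<open>p \<le> Suc q\<close> show "elem_weight s A b t = 1 / rt_gamma t"
    by (intro elem_weight_cond_B_cond_C[OF B C]) simp_all
qed

definition bush :: "nat \<Rightarrow> rtree" where
  "bush k = RNode (replicate k (RNode []))"

lemma rt_order_bush [simp]: "rt_order (bush k) = Suc k"
  by (simp add: bush_def sum_list_replicate)

lemma rt_gamma_bush [simp]: "rt_gamma (bush k) = Suc k"
  by (simp add: bush_def sum_list_replicate)

lemma rt_stage_weight_bush: "rt_stage_weight s A (bush k) i = (\<Sum>j<s. A i j) ^ k"
  by (simp add: bush_def)

lemma cond_B_rk_order_conditions:
  assumes "rk_order_conditions s c A b p"
  shows "cond_B s c b p"
  unfolding cond_B_def
proof
  fix k assume k: "k \<in> {1..p}"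
  have row_sums: "\<forall>i<s. c i = (\<Sum>j<s. A i j)"
    using assms unfolding rk_order_conditions_def by blast
  have "elem_weight s A b (bush (k - 1)) = (\<Sum>i<s. b i * c i ^ (k - 1))"
    unfolding elem_weight_def rt_stage_weight_bush using row_sums by simp
  moreover have "elem_weight s A b (bush (k - 1)) = 1 / k"
    using assms k unfolding rk_order_conditions_def by simp
  ultimately show "(\<Sum>i<s. b i * c i ^ (k - 1)) = 1 / k"
    by simp
qed

lemma cond_B_mono: "cond_B s c b p \<Longrightarrow> p' \<le> p \<Longrightarrow> cond_B s c b p'"
  unfolding cond_B_def by auto

lemma cond_C_mono: "cond_C s c A q \<Longrightarrow> q' \<le> q \<Longrightarrow> cond_C s c A q'"
  unfolding cond_C_def by auto

definition pade33 :: "complex \<Rightarrow> complex" where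
  "pade33 z = 1 + z/2 + z^2/10 + z^3/120"

lemma norm_pade33_minus_sq:
  fixes z :: complex
  defines "u \<equiv> - Re z" and "y \<equiv> Im z"
  shows "14400 * cmod (pade33 (-z))^2 = 14400 + 720*y^2 + 24*y^4 + y^6 + u*(14400 + 720*y^2 + 24*y^4)
     + u^2*(6480 + 288*y^2 + 3*y^4) + u^3*(1680 + 48*y^2) + u^4*(264 + 3*y^2) + u^5*24 + u^6"
  unfolding u_def y_def pade33_def cmod_power2
  by (simp add: power2_eq_square power3_eq_cube field_simps) (simp add: algebra_simps eval_nat_numeral)

lemma norm_pade33_minus_sq_diff:
  fixes z :: complex
  defines "u \<equiv> - Re z" and "y \<equiv> Im z"
  shows "14400 * (cmod (pade33 (-z))^2 - cmod (pade33 z)^2) =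
    u * (28800 + 1440*y^2 + 48*y^4 + 3360*u^2 + 96*u^2*y^2 + 48*u^4)"
  unfolding u_def y_def pade33_def cmod_power2
  by (simp add: power2_eq_square power3_eq_cube field_simps) (simp add: algebra_simps eval_nat_numeral)

lemma norm_pade33_minus_ge_1:
  assumes "Re z \<le> 0"
  shows "1 \<le> cmod (pade33 (-z))"
proof -
  have bound: "14400 \<le> 14400 + 720*y^2 + 24*y^4 + y^6 + u*(14400 + 720*y^2 + 24*y^4)
     + u^2*(6480 + 288*y^2 + 3*y^4) + u^3*(1680 + 48*y^2) + u^4*(264 + 3*y^2) + u^5*24 + u^6"
    if "0 \<le> u" for u y :: real
    using that by (simp add: zero_le_even_power)
  have "14400 \<le> 14400 * cmod (pade33 (-z))^2"
    unfolding norm_pade33_minus_sq by (rule bound) (use assms in simp)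
  then show ?thesis
    using power2_le_imp_le[of 1 "cmod (pade33 (-z))"] by simp
qed

lemma norm_pade33_le_minus:
  assumes "Re z \<le> 0"
  shows "cmod (pade33 z) \<le> cmod (pade33 (-z))"
proof -
  have nonneg: "0 \<le> u * (28800 + 1440*y^2 + 48*y^4 + 3360*u^2 + 96*u^2*y^2 + 48*u^4)"
    if "0 \<le> u" for u y :: real
    using that by (simp add: zero_le_even_power)
  have "0 \<le> 14400 * (cmod (pade33 (-z))^2 - cmod (pade33 z)^2)"
    unfolding norm_pade33_minus_sq_diff by (rule nonneg) (use assms in simp)
  then show ?thesis
    by (simp add: abs_le_square_iff[symmetric])
qed

lemma tab_stab_num: "stab_num 4 tab_A tab_b z = pade33 z"
  unfolding stab_num_def det_mat_4 pade33_def
  by (simp add: tab_A_def tab_b_def field_simps power2_eq_square power3_eq_cube)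

lemma tab_stab_den: "stab_den 4 tab_A z = pade33 (-z)"
  unfolding stab_den_def det_mat_4 pade33_def
  by (simp add: tab_A_def field_simps power2_eq_square power3_eq_cube)

lemma tab_cond_B_4: "cond_B 4 tab_c tab_b 4"
  unfolding cond_B_def
proof
  fix k :: nat assume "k \<in> {1..4}"
  then consider "k = 1" | "k = 2" | "k = 3" | "k = 4"
    by fastforce
  then show "(\<Sum>i<4. tab_b i * tab_c i ^ (k - 1)) = 1 / k"
    by cases (simp_all add: eval_nat_numeral tab_b_def tab_c_def)
qed

lemma tab_not_cond_B_5: "\<not> cond_B 4 tab_c tab_b 5"
proof
  assume "cond_B 4 tab_c tab_b 5"
  then have "(\<Sum>i<4. tab_b i * tab_c i ^ (5 - 1)) = 1 / real 5"
    unfolding cond_B_def by (rule bspec) simp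
  moreover have "(\<Sum>i<4. tab_b i * tab_c i ^ 4) = 11 / 54"
    by (simp add: eval_nat_numeral tab_b_def tab_c_def)
  ultimately show False
    by simp
qed

lemma tab_cond_C_3: "cond_C 4 tab_c tab_A 3"
  unfolding cond_C_def
proof (intro ballI allI impI)
  fix k i :: nat assume "k \<in> {1..3}" and "i < 4"
  then consider "k = 1" | "k = 2" | "k = 3"
    by fastforce
  then show "(\<Sum>j<4. tab_A i j * tab_c j ^ (k - 1)) = tab_c i ^ k / k"
    using \<open>i < 4\<close> by cases (auto simp: eval_nat_numeral less_Suc_eq tab_A_def tab_c_def)
qed

lemma tab_not_cond_C_4: "\<not> cond_C 4 tab_c tab_A 4"
proof
  assume "cond_C 4 tab_c tab_A 4"
  then have "(\<Sum>j<4. tab_A 1 j * tab_c j ^ (4 - 1)) = tab_c 1 ^ 4 / real 4"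
    unfolding cond_C_def by (auto dest!: bspec[where x = 4])
  moreover have "(\<Sum>j<4. tab_A 1 j * tab_c j ^ 3) = 1 / 540" and "tab_c 1 ^ 4 / 4 = 1 / 324"
    by (simp_all add: eval_nat_numeral tab_A_def tab_c_def)
  ultimately show False
    by simp
qed

theorem theorem3p1:
  shows "stiffly_accurate 4 tab_A tab_b \<and> explicit_first_line 4 tab_A \<and>
         A_stable 4 tab_A tab_b \<and> rk_order 4 tab_c tab_A tab_b 4 \<and>
         stage_order 4 tab_c tab_A tab_b 3"
proof (intro conjI)
  show "stiffly_accurate 4 tab_A tab_b"
    by (auto simp: stiffly_accurate_def tab_A_def tab_b_def eval_nat_numeral less_Suc_eq)
  show "explicit_first_line 4 tab_A"
    by (auto simp: explicit_first_line_def tab_A_def eval_nat_numeral less_Suc_eq)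
  show "A_stable 4 tab_A tab_b"
    using norm_pade33_minus_ge_1 norm_pade33_le_minus
    by (intro A_stableI) (fastforce simp: tab_stab_num tab_stab_den)+
  show "rk_order 4 tab_c tab_A tab_b 4"
    using rk_order_conditions_cond_B_cond_C[OF tab_cond_B_4 tab_cond_C_3]
      tab_not_cond_B_5 cond_B_rk_order_conditions
    by (auto simp: rk_order_def)
  show "stage_order 4 tab_c tab_A tab_b 3"
    using tab_cond_B_4 tab_cond_C_3 tab_not_cond_C_4 cond_B_mono cond_C_mono
    by (auto simp: stage_order_def)
qed

end
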